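(* Let $G=(V,E)$ be a finite graph with positive edge weight function $m$. Suppose there is a constant $0\le\beta<1$ such that for every $v\in V$, $m(v)\ge\left(\max_{e'\in E}m(e')\right)(1-\beta)|V|$. Then $h_G\ge1-2\beta$, i.e., $G$ is a $2\beta$-expander.
   Context: For a finite graph $G=(V,E)$ with positive edge weights $m:E\to\mathbb{R}_{>0}$, set $m(v)=\sum_{e\in E,\ v\in e}m(e)$, $m(U)=\sum_{v\in U}m(v)$, and $m(U_1,U_2)=\sum_{(u_1,u_2)\in U_1\times U_2,\ \{u_1,u_2\}\in E}m(\{u_1,u_2\})$. The (generalized) Cheeger constant is $h_G=\min_{\emptyset\neq U\subsetneq V}\frac{m(U,V\setminus U)\,m(V)}{m(U)\,m(V\setminus U)}$. $G$ is a $\lambda$-expander if $1-h_G\le\lambda$. *)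

theory Defs
  imports Main "HOL-Library.FuncSet" Complex_Main
begin

definition finite_graph :: "'a set \<Rightarrow> 'a set set \<Rightarrow> bool" where
  "finite_graph V E \<longleftrightarrow> finite V \<and> (\<forall>e\<in>E. \<exists>u v. u \<in> V \<and> v \<in> V \<and> u \<noteq> v \<and> e = {u, v})"

definition wdeg :: "'a set set \<Rightarrow> ('a set \<Rightarrow> real) \<Rightarrow> 'a \<Rightarrow> real" where
  "wdeg E m v = (\<Sum>e\<in>{e\<in>E. v \<in> e}. m e)"

definition wvol :: "'a set set \<Rightarrow> ('a set \<Rightarrow> real) \<Rightarrow> 'a set \<Rightarrow> real" where
  "wvol E m U = (\<Sum>v\<in>U. wdeg E m v)"

definition wcut :: "'a set set \<Rightarrow> ('a set \<Rightarrow> real) \<Rightarrow> 'a set \<Rightarrow> 'a set \<Rightarrow> real" where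
  "wcut E m U1 U2 = (\<Sum>p\<in>{p\<in>U1 \<times> U2. {fst p, snd p} \<in> E}. m {fst p, snd p})"

definition cheeger :: "'a set \<Rightarrow> 'a set set \<Rightarrow> ('a set \<Rightarrow> real) \<Rightarrow> real" where
  "cheeger V E m = Min ((\<lambda>U. wcut E m U (V - U) * wvol E m V / (wvol E m U * wvol E m (V - U)))
                         ` {U. U \<noteq> {} \<and> U \<subset> V})"

definition expander :: "real \<Rightarrow> 'a set \<Rightarrow> 'a set set \<Rightarrow> ('a set \<Rightarrow> real) \<Rightarrow> bool" where
  "expander lam V E m \<longleftrightarrow> 1 - cheeger V E m \<le> lam"

end

theory Submission
  imports Defs
begin

text \<open>Let \<open>M\<close> be the largest edge weight and \<open>\<delta>\<close> a lower bound for all vertex degrees. For a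
  vertex set \<open>U\<close> with \<open>k\<close> elements the inner weight \<open>m(U,U)\<close> is at most \<open>M k\<^sup>2\<close>, while
  \<open>m(U) \<ge> \<delta> k\<close>; since \<open>m(U) = m(U,U) + m(U,V-U)\<close>, the cut carries at least the fraction
  \<open>1 - M k / \<delta>\<close> of \<open>m(U)\<close>. Adding this for \<open>U\<close> and its complement, whose sizes add up to \<open>n = |V|\<close>,
  gives \<open>m(U,V-U)/m(U) + m(U,V-U)/m(V-U) \<ge> 2 - M n / \<delta>\<close>, and the left-hand side is exactly
  the Cheeger ratio of \<open>U\<close>. With \<open>\<delta> = M(1-\<beta>)n\<close> this is \<open>2 - 1/(1-\<beta>) \<ge> 1 - 2\<beta>\<close> for
  \<open>\<beta> \<le> 1/2\<close>; for larger \<open>\<beta>\<close> the claim holds because Cheeger ratios are nonnegative.\<close>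

lemma finite_graph_finite_edges:
  assumes "finite_graph V E"
  shows "finite E"
proof -
  have "E \<subseteq> Pow V" using assms by (auto simp: finite_graph_def)
  then show ?thesis using assms by (meson finite_Pow_iff finite_graph_def finite_subset)
qed

lemma finite_graph_card_gt_1:
  assumes "finite_graph V E" "E \<noteq> {}"
  shows "1 < card V"
proof -
  obtain x y where "x \<in> V" "y \<in> V" "x \<noteq> y"
    using assms unfolding finite_graph_def by blast
  then have "card {x, y} \<le> card V" using assms(1) by (intro card_mono) (auto simp: finite_graph_def)
  then show ?thesis using \<open>x \<noteq> y\<close> by simp
qed

definition adj_weight :: "'a set set \<Rightarrow> ('a set \<Rightarrow> real) \<Rightarrow> 'a \<Rightarrow> 'a \<Rightarrow> real" where
  "adj_weight E m u w = (if {u, w} \<in> E then m {u, w} else 0)"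

lemma adj_weight_commute: "adj_weight E m u w = adj_weight E m w u"
  by (simp add: adj_weight_def insert_commute)

lemma wcut_eq_sum_adj_weight:
  assumes "finite X" "finite Y"
  shows "wcut E m X Y = (\<Sum>u\<in>X. \<Sum>w\<in>Y. adj_weight E m u w)"
proof -
  have "wcut E m X Y = (\<Sum>p\<in>X \<times> Y. if {fst p, snd p} \<in> E then m {fst p, snd p} else 0)"
    unfolding wcut_def using assms by (simp add: sum.inter_filter)
  then show ?thesis
    by (simp add: adj_weight_def sum.cartesian_product case_prod_beta)
qed

lemma wdeg_eq_sum_adj_weight:
  assumes G: "finite_graph V E" and v: "v \<in> V"
  shows "wdeg E m v = (\<Sum>w\<in>V. adj_weight E m v w)"
proof -
  have "(\<lambda>w. {v, w}) ` {w\<in>V. {v, w} \<in> E} = {e\<in>E. v \<in> e}"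
  proof (intro equalityI subsetI)
    fix e assume e: "e \<in> {e\<in>E. v \<in> e}"
    then obtain x y where "x \<in> V" "y \<in> V" "e = {x, y}"
      using G unfolding finite_graph_def by blast
    with e show "e \<in> (\<lambda>w. {v, w}) ` {w\<in>V. {v, w} \<in> E}"
      by (auto simp: insert_commute)
  qed auto
  moreover have "inj_on (\<lambda>w. {v, w}) {w\<in>V. {v, w} \<in> E}"
    by (auto simp: inj_on_def doubleton_eq_iff)
  ultimately have "wdeg E m v = (\<Sum>w\<in>{w\<in>V. {v, w} \<in> E}. m {v, w})"
    unfolding wdeg_def by (metis (no_types, lifting) sum.reindex_cong)
  also have "\<dots> = (\<Sum>w\<in>V. adj_weight E m v w)"
    using G by (simp add: finite_graph_def adj_weight_def sum.inter_filter)
  finally show ?thesis .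
qed

lemma wvol_eq_wcut:
  assumes G: "finite_graph V E" and "X \<subseteq> V"
  shows "wvol E m X = wcut E m X V"
proof -
  have "finite V" using G by (simp add: finite_graph_def)
  with assms show ?thesis
    unfolding wvol_def
    by (simp add: wcut_eq_sum_adj_weight wdeg_eq_sum_adj_weight subsetD finite_subset)
qed

lemma wcut_Un_disjoint:
  assumes "finite X" "finite Y" "finite Z" "Y \<inter> Z = {}"
  shows "wcut E m X (Y \<union> Z) = wcut E m X Y + wcut E m X Z"
  using assms by (simp add: wcut_eq_sum_adj_weight sum.union_disjoint sum.distrib)

lemma wcut_commute:
  assumes "finite X" "finite Y"
  shows "wcut E m X Y = wcut E m Y X"
  using assms by (simp add: wcut_eq_sum_adj_weight sum.swap[of _ X] adj_weight_commute)

lemma wcut_le_card: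
  assumes "finite X" "finite Y" "\<And>e. e \<in> E \<Longrightarrow> m e \<le> M" "0 \<le> M"
  shows "wcut E m X Y \<le> M * card X * card Y"
proof -
  have "wcut E m X Y \<le> (\<Sum>u\<in>X. \<Sum>w\<in>Y. M)"
    unfolding wcut_eq_sum_adj_weight[OF assms(1,2)]
    by (intro sum_mono) (simp add: adj_weight_def assms(3,4))
  then show ?thesis by (simp add: mult_ac)
qed

lemma wcut_nonneg:
  assumes "\<And>e. e \<in> E \<Longrightarrow> 0 \<le> m e"
  shows "0 \<le> wcut E m X Y"
  unfolding wcut_def by (rule sum_nonneg) (simp add: assms)

lemma wvol_nonneg:
  assumes "\<And>e. e \<in> E \<Longrightarrow> 0 \<le> m e"
  shows "0 \<le> wvol E m U"
  unfolding wvol_def wdeg_def by (intro sum_nonneg) (simp add: assms)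

lemma cheeger_ratio_nonneg:
  assumes "\<And>e. e \<in> E \<Longrightarrow> 0 \<le> m e"
  shows "0 \<le> wcut E m U (V - U) * wvol E m V / (wvol E m U * wvol E m (V - U))"
  using assms by (simp add: wcut_nonneg wvol_nonneg)

lemma wvol_ge_card:
  assumes "\<And>v. v \<in> U \<Longrightarrow> \<delta> \<le> wdeg E m v"
  shows "\<delta> * card U \<le> wvol E m U"
  unfolding wvol_def using sum_bounded_below[of U \<delta> "wdeg E m"] assms
  by (simp add: mult.commute)

lemma wcut_compl_ge:
  assumes G: "finite_graph V E"
    and M: "\<And>e. e \<in> E \<Longrightarrow> m e \<le> M" "0 \<le> M"
    and \<delta>: "0 < \<delta>" "\<And>v. v \<in> V \<Longrightarrow> \<delta> \<le> wdeg E m v"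
    and U: "U \<subseteq> V"
  shows "wvol E m U * (1 - M * card U / \<delta>) \<le> wcut E m U (V - U)"
proof -
  have fV: "finite V" using G by (simp add: finite_graph_def)
  have fU: "finite U" using U fV finite_subset by blast
  define k where "k = real (card U)"
  have split: "wvol E m U = wcut E m U U + wcut E m U (V - U)"
    using wvol_eq_wcut[OF G U] wcut_Un_disjoint[of U U "V - U"] fU fV U
    by (simp add: Un_absorb1)
  have "wcut E m U U \<le> M * k / \<delta> * (\<delta> * k)"
    using wcut_le_card[of U U E m M] fU M \<delta>(1) by (simp add: k_def mult.assoc)
  also have "\<dots> \<le> M * k / \<delta> * wvol E m U"
    using wvol_ge_card[of U \<delta>] \<delta> M(2) U
    by (intro mult_left_mono) (auto simp: k_def)
  finally have inner: "wcut E m U U \<le> M * k / \<delta> * wvol E m U" .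
  have "wvol E m U * (1 - M * k / \<delta>) = wvol E m U - M * k / \<delta> * wvol E m U"
    by (simp add: right_diff_distrib)
  also have "\<dots> \<le> wvol E m U - wcut E m U U" using inner by simp
  also have "\<dots> = wcut E m U (V - U)" using split by simp
  finally show ?thesis by (simp add: k_def)
qed

lemma cheeger_ratio_ge:
  assumes G: "finite_graph V E"
    and M: "\<And>e. e \<in> E \<Longrightarrow> m e \<le> M" "0 \<le> M"
    and \<delta>: "0 < \<delta>" "\<And>v. v \<in> V \<Longrightarrow> \<delta> \<le> wdeg E m v"
    and U: "U \<noteq> {}" "U \<subset> V"
  shows "2 - M * card V / \<delta> \<le> wcut E m U (V - U) * wvol E m V / (wvol E m U * wvol E m (V - U))"
proof -
  define W where "W = V - U"
  have fV: "finite V" using G by (simp add: finite_graph_def)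
  have fU: "finite U" and fW: "finite W" using U fV finite_subset W_def by auto
  have W: "W \<noteq> {}" "W \<subseteq> V" "V - W = U" using U W_def by auto
  define a b c where "a = wvol E m U" and "b = wvol E m W" and "c = wcut E m U W"
  have "0 < \<delta> * card U" using U fU \<delta>(1) by (simp add: card_gt_0_iff)
  then have a: "0 < a" using wvol_ge_card[of U \<delta>] \<delta>(2) U by (force simp: a_def)
  have "0 < \<delta> * card W" using W fW \<delta>(1) by (simp add: card_gt_0_iff)
  then have b: "0 < b" using wvol_ge_card[of W \<delta>] \<delta>(2) W by (force simp: b_def)
  have "a * (1 - M * card U / \<delta>) \<le> c"
    using wcut_compl_ge[OF G M \<delta>, of U] U by (simp add: a_def c_def W_def)
  then have ca: "1 - M * card U / \<delta> \<le> c / a" using a by (simp add: pos_le_divide_eq mult.commute)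
  have "b * (1 - M * card W / \<delta>) \<le> c"
    using wcut_compl_ge[OF G M \<delta>, of W] W wcut_commute[OF fU fW] by (simp add: b_def c_def)
  then have cb: "1 - M * card W / \<delta> \<le> c / b" using b by (simp add: pos_le_divide_eq mult.commute)
  have "card V = card U + card W"
    using card_Un_disjoint[OF fU fW] U by (simp add: W_def Un_absorb1 psubset_imp_subset)
  then have "2 - M * card V / \<delta> = (1 - M * card U / \<delta>) + (1 - M * card W / \<delta>)"
    by (simp add: add_divide_distrib distrib_left)
  also have "\<dots> \<le> c / a + c / b" using ca cb by simp
  also have "\<dots> = c * (a + b) / (a * b)" using a b by (simp add: field_simps)
  also have "a + b = wvol E m V"
    using sum.subset_diff[OF _ fV, of U "wdeg E m"] U by (simp add: a_def b_def wvol_def W_def)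
  finally show ?thesis by (simp add: a_def b_def c_def W_def)
qed

lemma cheeger_geI:
  assumes "1 < card V"
    and "\<And>U. U \<noteq> {} \<Longrightarrow> U \<subset> V \<Longrightarrow>
           t \<le> wcut E m U (V - U) * wvol E m V / (wvol E m U * wvol E m (V - U))"
  shows "t \<le> cheeger V E m"
proof -
  have "finite V" using assms(1) card.infinite by fastforce
  obtain x where "x \<in> V" using assms(1) by (metis card.empty ex_in_conv not_less_zero)
  then have "{x} \<subset> V" using assms(1) by auto
  then have "{U. U \<noteq> {} \<and> U \<subset> V} \<noteq> {}" by blast
  moreover have "{U. U \<noteq> {} \<and> U \<subset> V} \<subseteq> Pow V" by auto
  then have "finite {U. U \<noteq> {} \<and> U \<subset> V}"
    using \<open>finite V\<close> by (meson finite_Pow_iff finite_subset)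
  ultimately show ?thesis unfolding cheeger_def using assms(2) by simp
qed

lemma one_minus_two_le_max_zero:
  fixes \<beta> :: real
  assumes "0 \<le> \<beta>" "\<beta> < 1"
  shows "1 - 2 * \<beta> \<le> max 0 (2 - 1 / (1 - \<beta>))"
proof (cases "\<beta> \<le> 1 / 2")
  case True
  have "\<beta> * (2 * \<beta>) \<le> \<beta> * 1" using True assms by (intro mult_left_mono) auto
  then have "1 \<le> (1 + 2 * \<beta>) * (1 - \<beta>)" by (simp add: algebra_simps)
  then have "1 / (1 - \<beta>) \<le> 1 + 2 * \<beta>" using assms by (simp add: divide_le_eq)
  then show ?thesis by simp
qed simp

theorem lemma4p5:
  fixes V :: "'a set" and E :: "'a set set" and m :: "'a set \<Rightarrow> real" and \<beta> :: real
  assumes "finite_graph V E"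
    and "E \<noteq> {}"
    and "\<And>e. e \<in> E \<Longrightarrow> m e > 0"
    and "0 \<le> \<beta>" and "\<beta> < 1"
    and "\<And>v. v \<in> V \<Longrightarrow> wdeg E m v \<ge> (MAX e'\<in>E. m e') * (1 - \<beta>) * real (card V)"
  shows "cheeger V E m \<ge> 1 - 2 * \<beta> \<and> expander (2 * \<beta>) V E m"
proof -
  define M where "M = (MAX e\<in>E. m e)"
  define \<delta> where "\<delta> = M * (1 - \<beta>) * card V"
  have M_ge: "\<And>e. e \<in> E \<Longrightarrow> m e \<le> M"
    using finite_graph_finite_edges[OF assms(1)] by (simp add: M_def)
  obtain e where "e \<in> E" using assms(2) by blast
  then have "0 < M" using M_ge assms(3) by (meson less_le_trans)
  have "1 < card V" using finite_graph_card_gt_1[OF assms(1,2)] .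
  have "0 < \<delta>" using \<open>0 < M\<close> \<open>1 < card V\<close> assms(5) by (simp add: \<delta>_def)
  have deg: "\<And>v. v \<in> V \<Longrightarrow> \<delta> \<le> wdeg E m v" using assms(6) by (simp add: \<delta>_def M_def)
  have M_\<delta>: "M * card V / \<delta> = 1 / (1 - \<beta>)" using \<open>0 < M\<close> \<open>1 < card V\<close> assms(5) by (simp add: \<delta>_def)
  have "1 - 2 * \<beta> \<le> cheeger V E m"
  proof (rule cheeger_geI[OF \<open>1 < card V\<close>])
    fix U assume U: "U \<noteq> {}" "U \<subset> V"
    let ?ratio = "wcut E m U (V - U) * wvol E m V / (wvol E m U * wvol E m (V - U))"
    have "0 \<le> ?ratio" using assms(3) by (intro cheeger_ratio_nonneg) (simp add: less_imp_le)
    moreover have "2 - 1 / (1 - \<beta>) \<le> ?ratio"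
      using cheeger_ratio_ge[OF assms(1) M_ge _ \<open>0 < \<delta>\<close> deg U] \<open>0 < M\<close> by (simp add: M_\<delta>)
    ultimately show "1 - 2 * \<beta> \<le> ?ratio"
      using one_minus_two_le_max_zero[OF assms(4,5)] by linarith
  qed
  then show ?thesis by (simp add: expander_def)
qed

end
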